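(* In the setting of $I\ge 2$ matched pairs with fixed potential outcomes, observed outcomes $Y_{ij}=Y_{ij}(Z_{ij})$, and conditional on $\mathcal F,\mathcal Z$ the within-pair assignments $\widetilde Z_{i1}$ independent across pairs with $P(\widetilde Z_{i1}=1\mid\mathcal F,\mathcal Z)=p_{i1}\in(0,1)$ and $\widetilde Z_{i2}=1-\widetilde Z_{i1}$, consider the classic (generalized) Neyman estimator $$\widehat\lambda=\frac{\sum_{i=1}^{I}(\widetilde Z_{i1}-\widetilde Z_{i2})(Y_{i1}-Y_{i2})}{\sum_{i=1}^{I}(z_i^{**}-z_i^{*})}$$ and the variance estimator $$\overline{\overline V}=\frac{1}{\big(\sum_{i=1}^{I}(z_i^{**}-z_i^{*})\big)^2}\,\frac{I}{I-1}\sum_{i=1}^{I}\Big(\widetilde Z_{i1}\big((Y_{i1}-Y_{i2})-a\big)^2+\widetilde Z_{i2}\big((Y_{i2}-Y_{i1})-a\big)^2\Big),\qquad a=\widehat\lambda\,\frac{1}{I}\sum_{i=1}^{I}(z_i^{**}-z_i^{*}).$$ Then $\mathbb E[\overline{\overline V}\mid\mathcal F,\mathcal Z]\ge \mathrm{Var}[\widehat\lambda\mid\mathcal F,\mathcal Z]$.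
   Context: $Z_{ij}$ is the observed treatment dose of individual $j$ in matched pair $i$; $z_i^{*}=Z_{i1}\wedge Z_{i2}<z_i^{**}=Z_{i1}\vee Z_{i2}$; $\widetilde Z_{ij}=\mathbf 1\{Z_{ij}=z_i^{**}\}$. $\mathcal Z$ is the set of the $2^I$ dose assignments obtained by permuting the two doses within each pair, and $\mathcal F=\{(Y_{ij}(z_i^* ),Y_{ij}(z_i^{**}),\mathbf{x}_{ij})\}$ collects the potential outcomes under the two paired doses and the covariates. Expectation and variance are over the randomization distribution of the within-pair assignments only. *)

theory Defs
  imports "HOL-Probability.Probability"
begin

text \<open>Pairs are indexed by i in {1..I}, units within a pair by j in {1,2}.
  zlo i = z_i^*, zhi i = z_i^**, Y i j z = potential outcome Y_ij(z).
  An assignment w :: nat => bool records w i = (Ztilde_i1 = 1), i.e. unit 1 of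
  pair i receives the larger dose zhi i and unit 2 the smaller dose zlo i.\<close>

definition dose :: "(nat \<Rightarrow> real) \<Rightarrow> (nat \<Rightarrow> real) \<Rightarrow> (nat \<Rightarrow> bool) \<Rightarrow> nat \<Rightarrow> nat \<Rightarrow> real" where
  "dose zlo zhi w i j = (if (w i \<longleftrightarrow> j = 1) then zhi i else zlo i)"

definition Ztil :: "(nat \<Rightarrow> real) \<Rightarrow> (nat \<Rightarrow> real) \<Rightarrow> (nat \<Rightarrow> bool) \<Rightarrow> nat \<Rightarrow> nat \<Rightarrow> real" where
  "Ztil zlo zhi w i j = (if dose zlo zhi w i j = zhi i then 1 else 0)"

definition Yobs :: "(nat \<Rightarrow> nat \<Rightarrow> real \<Rightarrow> real) \<Rightarrow> (nat \<Rightarrow> real) \<Rightarrow> (nat \<Rightarrow> real) \<Rightarrow> (nat \<Rightarrow> bool) \<Rightarrow> nat \<Rightarrow> nat \<Rightarrow> real" where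
  "Yobs Y zlo zhi w i j = Y i j (dose zlo zhi w i j)"

definition lambda_hat :: "nat \<Rightarrow> (nat \<Rightarrow> nat \<Rightarrow> real \<Rightarrow> real) \<Rightarrow> (nat \<Rightarrow> real) \<Rightarrow> (nat \<Rightarrow> real) \<Rightarrow> (nat \<Rightarrow> bool) \<Rightarrow> real" where
  "lambda_hat I Y zlo zhi w =
     (\<Sum>i=1..I. (Ztil zlo zhi w i 1 - Ztil zlo zhi w i 2) * (Yobs Y zlo zhi w i 1 - Yobs Y zlo zhi w i 2))
     / (\<Sum>i=1..I. zhi i - zlo i)"

definition Vbar :: "nat \<Rightarrow> (nat \<Rightarrow> nat \<Rightarrow> real \<Rightarrow> real) \<Rightarrow> (nat \<Rightarrow> real) \<Rightarrow> (nat \<Rightarrow> real) \<Rightarrow> (nat \<Rightarrow> bool) \<Rightarrow> real" where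
  "Vbar I Y zlo zhi w =
     (let D = (\<Sum>i=1..I. zhi i - zlo i);
          a = lambda_hat I Y zlo zhi w * (1 / real I) * D
      in 1 / D^2 * (real I / (real I - 1)) *
         (\<Sum>i=1..I. Ztil zlo zhi w i 1 * ((Yobs Y zlo zhi w i 1 - Yobs Y zlo zhi w i 2) - a)^2
                   + Ztil zlo zhi w i 2 * ((Yobs Y zlo zhi w i 2 - Yobs Y zlo zhi w i 1) - a)^2))"

definition assign_pmf :: "nat \<Rightarrow> (nat \<Rightarrow> real) \<Rightarrow> (nat \<Rightarrow> bool) pmf" where
  "assign_pmf I p = Pi_pmf {1..I} False (\<lambda>i. bernoulli_pmf (p i))"

end

theory Submission
  imports Defs
begin

text \<open>Let \<open>T\<^sub>i\<close> be the outcome of the higher-dose unit of pair \<open>i\<close> minus that of the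
  lower-dose unit. Then the Neyman estimator is \<open>(\<Sum>T\<^sub>i) / D\<close> and the variance estimator is
  \<open>I s\<^sup>2 / D\<^sup>2\<close>, where \<open>s\<^sup>2\<close> is the sample variance of the \<open>T\<^sub>i\<close>. Each \<open>T\<^sub>i\<close> depends only on
  the assignment within pair \<open>i\<close>, so the \<open>T\<^sub>i\<close> are independent and \<open>Var (\<Sum>T\<^sub>i) = \<Sum>\<sigma>\<^sub>i\<^sup>2\<close>,
  whereas \<open>E (I s\<^sup>2) = \<Sum>\<sigma>\<^sub>i\<^sup>2 + (I \<Sum>\<mu>\<^sub>i\<^sup>2 - (\<Sum>\<mu>\<^sub>i)\<^sup>2) / (I - 1)\<close> with \<open>\<mu>\<^sub>i = E T\<^sub>i\<close>.
  The excess term is nonnegative by Cauchy-Schwarz and vanishes exactly when the pair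
  effects \<open>\<mu>\<^sub>i\<close> are homogeneous.\<close>

lemma sum_squared_deviations:
  fixes x :: "'a \<Rightarrow> real"
  assumes "finite A" "A \<noteq> {}"
  shows "(\<Sum>i\<in>A. (x i - sum x A / card A)\<^sup>2) = (\<Sum>i\<in>A. (x i)\<^sup>2) - (sum x A)\<^sup>2 / card A"
proof -
  define s where "s = sum x A"
  define c where "c = real (card A)"
  have "(\<Sum>i\<in>A. (x i - s / c)\<^sup>2) = (\<Sum>i\<in>A. (x i)\<^sup>2 - 2 * (s / c) * x i + (s / c)\<^sup>2)"
    by (intro sum.cong refl) (simp add: power2_diff algebra_simps)
  also have "\<dots> = (\<Sum>i\<in>A. (x i)\<^sup>2) - 2 * (s / c) * s + c * (s / c)\<^sup>2"
    by (simp add: sum.distrib sum_subtractf sum_distrib_left[symmetric] sum_divide_distrib[symmetric] s_def c_def)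
  also have "\<dots> = (\<Sum>i\<in>A. (x i)\<^sup>2) - s\<^sup>2 / c"
    using assms by (simp add: c_def power2_eq_square field_simps)
  finally show ?thesis
    by (simp add: s_def c_def)
qed

definition sample_variance :: "'a set \<Rightarrow> ('a \<Rightarrow> real) \<Rightarrow> real" where
  "sample_variance A x = (\<Sum>i\<in>A. (x i - sum x A / card A)\<^sup>2) / (real (card A) - 1)"

context
  fixes A :: "'a set" and d :: 'b and M :: "'a \<Rightarrow> 'b pmf"
  assumes finite_A: "finite A"
    and finite_support: "\<And>i. i \<in> A \<Longrightarrow> finite (set_pmf (M i))"
begin

lemma finite_set_Pi_pmf: "finite (set_pmf (Pi_pmf A d M))"
  using finite_A finite_support by (auto simp: set_Pi_pmf)

lemma integrable_Pi_pmf [simp]: "integrable (measure_pmf (Pi_pmf A d M)) (g :: _ \<Rightarrow> real)"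
  by (rule integrable_measure_pmf_finite[OF finite_set_Pi_pmf])

lemma expectation_Pi_pmf_component:
  fixes g :: "'b \<Rightarrow> real"
  assumes "i \<in> A"
  shows "measure_pmf.expectation (Pi_pmf A d M) (\<lambda>w. g (w i)) = measure_pmf.expectation (M i) g"
proof -
  have "measure_pmf.expectation (Pi_pmf A d M) (\<lambda>w. g (w i))
      = measure_pmf.expectation (map_pmf (\<lambda>w. w i) (Pi_pmf A d M)) g"
    by (simp only: integral_map_pmf)
  also have "map_pmf (\<lambda>w. w i) (Pi_pmf A d M) = M i"
    using assms by (subst Pi_pmf_component[OF finite_A]) simp
  finally show ?thesis .
qed

lemma expectation_Pi_pmf_mult:
  fixes g h :: "'b \<Rightarrow> real"
  assumes "i \<in> A" "j \<in> A" "i \<noteq> j"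
  shows "measure_pmf.expectation (Pi_pmf A d M) (\<lambda>w. g (w i) * h (w j))
       = measure_pmf.expectation (M i) g * measure_pmf.expectation (M j) h"
proof -
  define X where "X = (\<lambda>k (w :: 'a \<Rightarrow> 'b). if k = i then g (w k) else h (w k))"
  have "prob_space.indep_vars (Pi_pmf A d M) (\<lambda>_. borel) X A"
    unfolding X_def
    by (rule prob_space.indep_vars_compose2[OF measure_pmf.prob_space_axioms indep_vars_Pi_pmf[OF finite_A]]) simp
  then have "prob_space.indep_vars (Pi_pmf A d M) (\<lambda>_. borel) X {i, j}"
    by (rule prob_space.indep_vars_subset[OF measure_pmf.prob_space_axioms]) (use assms in auto)
  then have "measure_pmf.expectation (Pi_pmf A d M) (\<lambda>w. \<Prod>k\<in>{i, j}. X k w)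
      = (\<Prod>k\<in>{i, j}. measure_pmf.expectation (Pi_pmf A d M) (X k))"
    by (intro prob_space.indep_vars_lebesgue_integral[OF measure_pmf.prob_space_axioms]) auto
  then show ?thesis
    using assms by (simp add: X_def expectation_Pi_pmf_component)
qed

lemma expectation_Pi_pmf_mult_components:
  fixes f :: "'a \<Rightarrow> 'b \<Rightarrow> real"
  assumes "i \<in> A" "j \<in> A"
  shows "measure_pmf.expectation (Pi_pmf A d M) (\<lambda>w. f i (w i) * f j (w j))
       = measure_pmf.expectation (M i) (f i) * measure_pmf.expectation (M j) (f j)
         + (if i = j then measure_pmf.variance (M i) (f i) else 0)"
proof (cases "i = j")
  case True
  have "measure_pmf.expectation (Pi_pmf A d M) (\<lambda>w. f i (w i) * f i (w i))
      = measure_pmf.expectation (M i) (\<lambda>v. (f i v)\<^sup>2)"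
    using expectation_Pi_pmf_component[OF assms(1), of "\<lambda>v. (f i v)\<^sup>2"]
    by (simp add: power2_eq_square)
  also have "\<dots> = (measure_pmf.expectation (M i) (f i))\<^sup>2 + measure_pmf.variance (M i) (f i)"
    using assms finite_support
    by (simp add: measure_pmf.variance_eq integrable_measure_pmf_finite)
  finally show ?thesis
    using True by (simp add: power2_eq_square)
qed (use assms in \<open>simp add: expectation_Pi_pmf_mult\<close>)

lemma expectation_Pi_pmf_square_sum:
  fixes f :: "'a \<Rightarrow> 'b \<Rightarrow> real"
  shows "measure_pmf.expectation (Pi_pmf A d M) (\<lambda>w. (\<Sum>i\<in>A. f i (w i))\<^sup>2)
       = (\<Sum>i\<in>A. measure_pmf.expectation (M i) (f i))\<^sup>2
         + (\<Sum>i\<in>A. measure_pmf.variance (M i) (f i))"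
proof -
  have "measure_pmf.expectation (Pi_pmf A d M) (\<lambda>w. (\<Sum>i\<in>A. f i (w i))\<^sup>2)
      = (\<Sum>i\<in>A. \<Sum>j\<in>A. measure_pmf.expectation (Pi_pmf A d M) (\<lambda>w. f i (w i) * f j (w j)))"
    by (simp add: power2_eq_square sum_product)
  also have "\<dots> = (\<Sum>i\<in>A. \<Sum>j\<in>A. measure_pmf.expectation (M i) (f i) * measure_pmf.expectation (M j) (f j)
                   + (if i = j then measure_pmf.variance (M i) (f i) else 0))"
    by (intro sum.cong refl) (simp add: expectation_Pi_pmf_mult_components)
  also have "\<dots> = (\<Sum>i\<in>A. measure_pmf.expectation (M i) (f i))\<^sup>2
                   + (\<Sum>i\<in>A. measure_pmf.variance (M i) (f i))"
    using finite_A by (simp add: sum.distrib power2_eq_square sum_product)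
  finally show ?thesis .
qed

lemma variance_Pi_pmf_sum:
  fixes f :: "'a \<Rightarrow> 'b \<Rightarrow> real"
  shows "measure_pmf.variance (Pi_pmf A d M) (\<lambda>w. \<Sum>i\<in>A. f i (w i))
       = (\<Sum>i\<in>A. measure_pmf.variance (M i) (f i))"
proof -
  have "measure_pmf.expectation (Pi_pmf A d M) (\<lambda>w. \<Sum>i\<in>A. f i (w i))
      = (\<Sum>i\<in>A. measure_pmf.expectation (M i) (f i))"
    by (simp add: expectation_Pi_pmf_component)
  then show ?thesis
    by (subst measure_pmf.variance_eq) (simp_all add: expectation_Pi_pmf_square_sum)
qed

lemma variance_Pi_pmf_sum_le_sample_variance:
  fixes f :: "'a \<Rightarrow> 'b \<Rightarrow> real"
  assumes "card A \<ge> 2"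
  shows "measure_pmf.variance (Pi_pmf A d M) (\<lambda>w. \<Sum>i\<in>A. f i (w i))
       \<le> measure_pmf.expectation (Pi_pmf A d M) (\<lambda>w. card A * sample_variance A (\<lambda>i. f i (w i)))"
proof -
  define n where "n = real (card A)"
  define \<mu> where "\<mu> i = measure_pmf.expectation (M i) (f i)" for i
  define \<sigma>\<^sub>2 where "\<sigma>\<^sub>2 i = measure_pmf.variance (M i) (f i)" for i
  have n: "n \<ge> 2"
    using assms by (simp add: n_def)
  have "card A * sample_variance A (\<lambda>i. f i (w i))
      = n / (n - 1) * ((\<Sum>i\<in>A. (f i (w i))\<^sup>2) - (\<Sum>i\<in>A. f i (w i))\<^sup>2 / n)" for w
    using sum_squared_deviations[OF finite_A, of "\<lambda>i. f i (w i)"] assms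
    by (fastforce simp: sample_variance_def n_def)
  moreover have "measure_pmf.expectation (Pi_pmf A d M) (\<lambda>w. \<Sum>i\<in>A. (f i (w i))\<^sup>2)
      = (\<Sum>i\<in>A. (\<mu> i)\<^sup>2 + \<sigma>\<^sub>2 i)"
    using expectation_Pi_pmf_mult_components[of _ _ f]
    by (simp add: power2_eq_square \<mu>_def \<sigma>\<^sub>2_def)
  ultimately have "measure_pmf.expectation (Pi_pmf A d M) (\<lambda>w. card A * sample_variance A (\<lambda>i. f i (w i)))
      = n / (n - 1) * ((\<Sum>i\<in>A. (\<mu> i)\<^sup>2 + \<sigma>\<^sub>2 i) - ((sum \<mu> A)\<^sup>2 + sum \<sigma>\<^sub>2 A) / n)"
    by (simp add: expectation_Pi_pmf_square_sum \<mu>_def \<sigma>\<^sub>2_def)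
  also have "\<dots> = sum \<sigma>\<^sub>2 A + (n * (\<Sum>i\<in>A. (\<mu> i)\<^sup>2) - (sum \<mu> A)\<^sup>2) / (n - 1)"
    using n by (simp add: sum.distrib field_simps)
  also have "\<dots> \<ge> sum \<sigma>\<^sub>2 A"
    using sum_squared_le_sum_of_squares[of \<mu> A] n by (simp add: n_def mult.commute)
  finally show ?thesis
    unfolding variance_Pi_pmf_sum \<sigma>\<^sub>2_def .
qed

end

lemma (in prob_space) variance_divide:
  fixes X :: "'a \<Rightarrow> real"
  shows "variance (\<lambda>x. X x / c) = variance X / c\<^sup>2"
  by (simp add: diff_divide_distrib[symmetric] power_divide)

definition pair_contrast ::
    "(nat \<Rightarrow> nat \<Rightarrow> real \<Rightarrow> real) \<Rightarrow> (nat \<Rightarrow> real) \<Rightarrow> (nat \<Rightarrow> real) \<Rightarrow> nat \<Rightarrow> bool \<Rightarrow> real" where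
  "pair_contrast Y zlo zhi i b =
     (if b then Y i 1 (zhi i) - Y i 2 (zlo i) else Y i 2 (zhi i) - Y i 1 (zlo i))"

lemma lambda_hat_summand_eq_pair_contrast:
  assumes "zlo i < zhi i"
  shows "(Ztil zlo zhi w i 1 - Ztil zlo zhi w i 2) * (Yobs Y zlo zhi w i 1 - Yobs Y zlo zhi w i 2)
       = pair_contrast Y zlo zhi i (w i)"
  using assms by (cases "w i") (auto simp: Ztil_def Yobs_def dose_def pair_contrast_def)

lemma Vbar_summand_eq_pair_contrast:
  assumes "zlo i < zhi i"
  shows "Ztil zlo zhi w i 1 * ((Yobs Y zlo zhi w i 1 - Yobs Y zlo zhi w i 2) - a)\<^sup>2
           + Ztil zlo zhi w i 2 * ((Yobs Y zlo zhi w i 2 - Yobs Y zlo zhi w i 1) - a)\<^sup>2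
       = (pair_contrast Y zlo zhi i (w i) - a)\<^sup>2"
  using assms by (cases "w i") (auto simp: Ztil_def Yobs_def dose_def pair_contrast_def)

context
  fixes I :: nat and Y :: "nat \<Rightarrow> nat \<Rightarrow> real \<Rightarrow> real" and zlo zhi :: "nat \<Rightarrow> real"
  assumes doses_ordered: "\<And>i. i \<in> {1..I} \<Longrightarrow> zlo i < zhi i"
begin

lemma lambda_hat_eq_sum_pair_contrast:
  "lambda_hat I Y zlo zhi w = (\<Sum>i=1..I. pair_contrast Y zlo zhi i (w i)) / (\<Sum>i=1..I. zhi i - zlo i)"
  unfolding lambda_hat_def
  by (rule arg_cong[where f="\<lambda>x. x / _"], rule sum.cong[OF refl],
      rule lambda_hat_summand_eq_pair_contrast, rule doses_ordered)

lemma Vbar_eq_sample_variance_pair_contrast: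
  "Vbar I Y zlo zhi w
     = I * sample_variance {1..I} (\<lambda>i. pair_contrast Y zlo zhi i (w i)) / (\<Sum>i=1..I. zhi i - zlo i)\<^sup>2"
proof -
  have "(\<Sum>i=1..I. zhi i - zlo i) \<noteq> 0" if "I \<ge> 1"
    using that doses_ordered by (intro sum_pos[THEN less_imp_neq, symmetric]) auto
  then have mean: "lambda_hat I Y zlo zhi w * (1 / real I) * (\<Sum>i=1..I. zhi i - zlo i)
      = (\<Sum>k=1..I. pair_contrast Y zlo zhi k (w k)) / real I"
    by (cases "I = 0") (auto simp: lambda_hat_eq_sum_pair_contrast)
  have "(\<Sum>i=1..I. Ztil zlo zhi w i 1 * ((Yobs Y zlo zhi w i 1 - Yobs Y zlo zhi w i 2) - a)\<^sup>2
           + Ztil zlo zhi w i 2 * ((Yobs Y zlo zhi w i 2 - Yobs Y zlo zhi w i 1) - a)\<^sup>2)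
      = (\<Sum>i=1..I. (pair_contrast Y zlo zhi i (w i) - a)\<^sup>2)" for a
    by (rule sum.cong[OF refl], rule Vbar_summand_eq_pair_contrast, rule doses_ordered)
  then show ?thesis
    unfolding Vbar_def Let_def mean by (simp add: sample_variance_def)
qed

end

theorem lemma1:
  fixes I :: nat and Y :: "nat \<Rightarrow> nat \<Rightarrow> real \<Rightarrow> real"
    and zlo zhi p :: "nat \<Rightarrow> real"
  assumes "I \<ge> 2"
    and "\<And>i. i \<in> {1..I} \<Longrightarrow> zlo i < zhi i"
    and "\<And>i. i \<in> {1..I} \<Longrightarrow> 0 < p i \<and> p i < 1"
  shows "measure_pmf.expectation (assign_pmf I p) (Vbar I Y zlo zhi)
           \<ge> measure_pmf.variance (assign_pmf I p) (lambda_hat I Y zlo zhi)"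
proof -
  define P where "P = Pi_pmf {1..I} False (\<lambda>i. bernoulli_pmf (p i))"
  define D where "D = (\<Sum>i=1..I. zhi i - zlo i)"
  define S where "S = (\<lambda>w. \<Sum>i=1..I. pair_contrast Y zlo zhi i (w i))"
  define Q where "Q = (\<lambda>w. I * sample_variance {1..I} (\<lambda>i. pair_contrast Y zlo zhi i (w i)))"
  have "card {1..I} = I"
    by simp
  moreover have "measure_pmf.variance P S
      \<le> measure_pmf.expectation P (\<lambda>w. card {1..I} * sample_variance {1..I} (\<lambda>i. pair_contrast Y zlo zhi i (w i)))"
    unfolding P_def S_def using assms(1) by (intro variance_Pi_pmf_sum_le_sample_variance) simp_all
  ultimately have "measure_pmf.variance P S \<le> measure_pmf.expectation P Q"
    by (simp only: Q_def)
  then have "measure_pmf.variance P (\<lambda>w. S w / D) \<le> measure_pmf.expectation P (\<lambda>w. Q w / D\<^sup>2)"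
    unfolding measure_pmf.variance_divide by (simp add: divide_right_mono)
  moreover have "lambda_hat I Y zlo zhi = (\<lambda>w. S w / D)" "Vbar I Y zlo zhi = (\<lambda>w. Q w / D\<^sup>2)"
    using lambda_hat_eq_sum_pair_contrast[OF assms(2)] Vbar_eq_sample_variance_pair_contrast[OF assms(2)]
    by (auto simp: S_def D_def Q_def)
  ultimately show ?thesis
    by (simp add: P_def assign_pmf_def)
qed

end
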